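(* Let $H=(V,\mathcal E)$ be a hypergraph with maximum degree $\Delta$ in which every hyperedge has at most $k$ vertices. Let $B\subseteq\mathcal E$ be a set of hyperedges inducing a connected subgraph of $\mathrm L^2(H)$, and let $e^*\in B$. Then there exists a $\{2,3\}$-tree $T\subseteq B$ in $\mathrm{Lin}(H)$ with $e^*\in T$ and $|T|\ge\frac{|B|}{k\Delta}$.
   Context: $\mathrm{Lin}(H)$ is the line graph of $H$: its vertices are the hyperedges of $H$, two distinct hyperedges adjacent iff they share a vertex. $\mathrm L^2(H)$ is the graph on the hyperedges of $H$ in which two hyperedges are adjacent iff their distance in $\mathrm{Lin}(H)$ is at most $2$. For a graph $G$, a set $T$ of its vertices is a $\{2,3\}$-tree if (1) $\mathrm{dist}_G(u,w)\ge 2$ for all distinct $u,w\in T$, and (2) the graph on $T$ joining $u,w$ whenever $\mathrm{dist}_G(u,w)\in\{2,3\}$ is connected. *)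

theory Defs
  imports Complex_Main
begin

definition hypergraph :: "'a set \<Rightarrow> 'a set set \<Rightarrow> bool" where
  "hypergraph V E \<longleftrightarrow> finite V \<and> (\<forall>e\<in>E. e \<subseteq> V)"

definition hdegree :: "'a set set \<Rightarrow> 'a \<Rightarrow> nat" where
  "hdegree E v = card {e\<in>E. v \<in> e}"

definition max_degree :: "'a set \<Rightarrow> 'a set set \<Rightarrow> nat" where
  "max_degree V E = Max ({hdegree E v | v. v \<in> V} \<union> {0})"

definition lin_adj :: "'a set set \<Rightarrow> 'a set \<Rightarrow> 'a set \<Rightarrow> bool" where
  "lin_adj E e f \<longleftrightarrow> e \<in> E \<and> f \<in> E \<and> e \<noteq> f \<and> e \<inter> f \<noteq> {}"

definition lin_dist_le :: "'a set set \<Rightarrow> nat \<Rightarrow> 'a set \<Rightarrow> 'a set \<Rightarrow> bool" where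
  "lin_dist_le E n e f \<longleftrightarrow> (\<exists>m\<le>n. (e, f) \<in> {(x, y). lin_adj E x y} ^^ m)"

definition L2_adj :: "'a set set \<Rightarrow> 'a set \<Rightarrow> 'a set \<Rightarrow> bool" where
  "L2_adj E e f \<longleftrightarrow> e \<in> E \<and> f \<in> E \<and> e \<noteq> f \<and> lin_dist_le E 2 e f"

definition induced_connected :: "('b \<Rightarrow> 'b \<Rightarrow> bool) \<Rightarrow> 'b set \<Rightarrow> bool" where
  "induced_connected adj S \<longleftrightarrow>
     (\<forall>u\<in>S. \<forall>v\<in>S. (u, v) \<in> {(x, y). x \<in> S \<and> y \<in> S \<and> adj x y}\<^sup>*)"

definition tree23 :: "'a set set \<Rightarrow> 'a set set \<Rightarrow> bool" where
  "tree23 E T \<longleftrightarrow> T \<subseteq> E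
     \<and> (\<forall>u\<in>T. \<forall>w\<in>T. u \<noteq> w \<longrightarrow> \<not> lin_dist_le E 1 u w)
     \<and> induced_connected
         (\<lambda>u w. u \<noteq> w \<and> lin_dist_le E 3 u w \<and> \<not> lin_dist_le E 1 u w) T"

end

theory Submission
  imports Defs
begin

text \<open>Take a {2,3}-tree T with e0 \<in> T \<subseteq> B that is maximal under inclusion. Every
  hyperedge of B then lies within distance 1 of T: walk from e0 along an L^2(H)-path in B;
  if the path reaches a hyperedge z at distance \<ge> 2 from T, its predecessor is within
  distance 1 of some t \<in> T, so z is at distance 2 or 3 from t and T \<union> {z} is a larger
  {2,3}-tree. A closed neighbourhood in Lin(H) has at most k\<Delta> hyperedges (each of the at
  most k vertices of a hyperedge lies in at most \<Delta> hyperedges), hence |B| \<le> k\<Delta> |T|.\<close>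

lemma relpow_converse: "(R ^^ n)\<inverse> = (R\<inverse>) ^^ n" for R :: "('a \<times> 'a) set"
  by (induction n) (simp_all add: converse_relcomp relpow_commute)

lemma lin_dist_le_refl: "lin_dist_le E n e e"
  unfolding lin_dist_le_def by (auto intro: relpow_0_I)

lemma lin_dist_le_sym:
  assumes "lin_dist_le E n e f"
  shows "lin_dist_le E n f e"
proof -
  have "sym {(x, y). lin_adj E x y}" by (auto simp: sym_def lin_adj_def)
  then have "sym ({(x, y). lin_adj E x y} ^^ m)" for m
    by (simp add: sym_conv_converse_eq relpow_converse)
  then show ?thesis using assms unfolding lin_dist_le_def by (auto dest: symD)
qed

lemma lin_dist_le_trans:
  assumes "lin_dist_le E m e f" and "lin_dist_le E n f g"
  shows "lin_dist_le E (m + n) e g"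
proof -
  obtain i j where "i \<le> m" "j \<le> n" and "(e, f) \<in> {(x, y). lin_adj E x y} ^^ i"
    and "(f, g) \<in> {(x, y). lin_adj E x y} ^^ j"
    using assms unfolding lin_dist_le_def by blast
  then have "i + j \<le> m + n" and "(e, g) \<in> {(x, y). lin_adj E x y} ^^ (i + j)"
    by (auto simp: relpow_add)
  then show ?thesis unfolding lin_dist_le_def by blast
qed

lemma lin_dist_le_1_iff: "lin_dist_le E 1 e f \<longleftrightarrow> e = f \<or> lin_adj E e f"
proof -
  have "(\<exists>m\<le>1. P m) \<longleftrightarrow> P 0 \<or> P 1" for P :: "nat \<Rightarrow> bool"
    using le_Suc_eq by auto
  then show ?thesis unfolding lin_dist_le_def by simp
qed

lemma hypergraph_finite_edges: "hypergraph V E \<Longrightarrow> finite E"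
  unfolding hypergraph_def by (meson Pow_iff finite_Pow_iff finite_subset subsetI)

lemma hdegree_le_max_degree: "finite V \<Longrightarrow> v \<in> V \<Longrightarrow> hdegree E v \<le> max_degree V E"
  unfolding max_degree_def by (intro Max_ge) auto

lemma card_le_card_mult_if_covered:
  assumes "finite I" and "A \<subseteq> (\<Union>i\<in>I. N i)"
    and "\<And>i. i \<in> I \<Longrightarrow> finite (N i)" and "\<And>i. i \<in> I \<Longrightarrow> card (N i) \<le> c"
  shows "card A \<le> card I * c"
proof -
  have "card A \<le> card (\<Union>i\<in>I. N i)" using assms(1-3) by (intro card_mono) auto
  also have "\<dots> \<le> (\<Sum>i\<in>I. card (N i))" using assms(1) by (rule card_UN_le)
  also have "\<dots> \<le> card I * c" using sum_bounded_above[of I "\<lambda>i. card (N i)" c] assms(4) by simp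
  finally show ?thesis .
qed

text \<open>The \<open>max 1\<close> covers an empty hyperedge, which is its own only neighbour.\<close>
lemma card_lin_ball1_le:
  assumes "hypergraph V E" and "e \<in> E"
  shows "card {f\<in>E. lin_dist_le E 1 f e} \<le> max 1 (card e * max_degree V E)"
proof (cases "e = {}")
  case True
  then have "{f\<in>E. lin_dist_le E 1 f e} \<subseteq> {e}"
    unfolding lin_dist_le_1_iff by (auto simp: lin_adj_def)
  then have "card {f\<in>E. lin_dist_le E 1 f e} \<le> card {e}" by (intro card_mono) auto
  then show ?thesis by simp
next
  case False
  have "finite V" and "e \<subseteq> V" using assms by (auto simp: hypergraph_def)
  then have "finite e" by (rule finite_subset[rotated])
  have "{f\<in>E. lin_dist_le E 1 f e} \<subseteq> (\<Union>v\<in>e. {f\<in>E. v \<in> f})"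
    using False \<open>e \<in> E\<close> unfolding lin_dist_le_1_iff by (auto simp: lin_adj_def)
  moreover have "card {f\<in>E. v \<in> f} \<le> max_degree V E" if "v \<in> e" for v
    using hdegree_le_max_degree[OF \<open>finite V\<close>, of v E] that \<open>e \<subseteq> V\<close>
    unfolding hdegree_def by blast
  ultimately have "card {f\<in>E. lin_dist_le E 1 f e} \<le> card e * max_degree V E"
    using \<open>finite e\<close> hypergraph_finite_edges[OF assms(1)]
    by (intro card_le_card_mult_if_covered[where N = "\<lambda>v. {f\<in>E. v \<in> f}"]) auto
  then show ?thesis by simp
qed

lemma induced_connected_insert:
  assumes "induced_connected adj S" and "s \<in> S" and "adj z s" and "adj s z"
  shows "induced_connected adj (insert z S)"
proof -
  let ?R = "{(x, y). x \<in> insert z S \<and> y \<in> insert z S \<and> adj x y}"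
  have "{(x, y). x \<in> S \<and> y \<in> S \<and> adj x y}\<^sup>* \<subseteq> ?R\<^sup>*" by (rule rtrancl_mono) auto
  then have "(u, s) \<in> ?R\<^sup>* \<and> (s, u) \<in> ?R\<^sup>*" if "u \<in> insert z S" for u
    using assms that unfolding induced_connected_def by (auto intro: r_into_rtrancl)
  then show ?thesis unfolding induced_connected_def by (meson rtrancl_trans)
qed

lemma tree23_insert:
  assumes T: "tree23 E T" and "z \<in> E" and "t \<in> T" and "lin_dist_le E 3 z t"
    and far: "\<forall>u\<in>T. \<not> lin_dist_le E 1 z u"
  shows "tree23 E (insert z T)"
proof -
  let ?adj = "\<lambda>u w. u \<noteq> w \<and> lin_dist_le E 3 u w \<and> \<not> lin_dist_le E 1 u w"
  have far_sym: "\<not> lin_dist_le E 1 u z" if "u \<in> T" for u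
    using far that lin_dist_le_sym by blast
  then have "?adj z t" and "?adj t z"
    using far \<open>t \<in> T\<close> \<open>lin_dist_le E 3 z t\<close> lin_dist_le_sym lin_dist_le_refl by metis+
  then have "induced_connected ?adj (insert z T)"
    using T \<open>t \<in> T\<close> unfolding tree23_def by (intro induced_connected_insert) auto
  moreover have "\<forall>u\<in>insert z T. \<forall>w\<in>insert z T. u \<noteq> w \<longrightarrow> \<not> lin_dist_le E 1 u w"
    using T far far_sym unfolding tree23_def by blast
  ultimately show ?thesis using T \<open>z \<in> E\<close> unfolding tree23_def by blast
qed

lemma maximal_tree23_dominates:
  assumes conn: "induced_connected (L2_adj E) B" and "e0 \<in> T" and "T \<subseteq> B" and "tree23 E T"
    and maximal: "\<And>z. z \<in> B \<Longrightarrow> tree23 E (insert z T) \<Longrightarrow> z \<in> T"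
  shows "\<forall>f\<in>B. \<exists>t\<in>T. lin_dist_le E 1 f t"
proof
  fix f assume "f \<in> B"
  then have "(e0, f) \<in> {(x, y). x \<in> B \<and> y \<in> B \<and> L2_adj E x y}\<^sup>*"
    using conn \<open>e0 \<in> T\<close> \<open>T \<subseteq> B\<close> unfolding induced_connected_def by blast
  then show "\<exists>t\<in>T. lin_dist_le E 1 f t"
  proof (induction rule: rtrancl_induct)
    case base
    then show ?case using \<open>e0 \<in> T\<close> lin_dist_le_refl by blast
  next
    case (step y z)
    then obtain t where "t \<in> T" and "lin_dist_le E 1 y t" and "z \<in> B" and "L2_adj E y z" by auto
    then have "z \<in> E" and "lin_dist_le E 2 z y" by (auto simp: L2_adj_def intro: lin_dist_le_sym)
    then have "lin_dist_le E 3 z t"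
      using lin_dist_le_trans[of E 2 z y 1 t] \<open>lin_dist_le E 1 y t\<close> by simp
    show ?case
    proof (rule ccontr)
      assume "\<not> ?case"
      then have "tree23 E (insert z T)"
        using tree23_insert[OF \<open>tree23 E T\<close> \<open>z \<in> E\<close> \<open>t \<in> T\<close> \<open>lin_dist_le E 3 z t\<close>] by blast
      then have "z \<in> T" using maximal \<open>z \<in> B\<close> by blast
      then show False using \<open>\<not> ?case\<close> lin_dist_le_refl by blast
    qed
  qed
qed

lemma card_le_card_mult_if_dominated:
  assumes "hypergraph V E" and "\<forall>e\<in>E. card e \<le> k" and "0 < k * max_degree V E"
    and "T \<subseteq> E" and "B \<subseteq> E" and "\<forall>f\<in>B. \<exists>t\<in>T. lin_dist_le E 1 f t"
  shows "card B \<le> card T * (k * max_degree V E)"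
proof -
  have "finite E" using assms(1) by (rule hypergraph_finite_edges)
  have "card {f\<in>E. lin_dist_le E 1 f t} \<le> k * max_degree V E" if "t \<in> T" for t
  proof -
    have "t \<in> E" using that assms(4) by blast
    have "card {f\<in>E. lin_dist_le E 1 f t} \<le> max 1 (card t * max_degree V E)"
      using assms(1) \<open>t \<in> E\<close> by (rule card_lin_ball1_le)
    also have "\<dots> \<le> k * max_degree V E" using assms(2,3) \<open>t \<in> E\<close> by simp
    finally show ?thesis .
  qed
  moreover have "finite T" using assms(4) \<open>finite E\<close> by (rule finite_subset)
  ultimately show ?thesis
    using \<open>finite E\<close> assms(5,6)
    by (intro card_le_card_mult_if_covered[where N = "\<lambda>t. {f\<in>E. lin_dist_le E 1 f t}"]) auto
qed

theorem lemma4p5: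
  fixes V :: "'a set" and E :: "'a set set" and k \<Delta> :: nat
    and B :: "'a set set" and e0 :: "'a set"
  assumes "hypergraph V E"
    and "\<Delta> = max_degree V E"
    and "\<forall>e\<in>E. card e \<le> k"
    and "B \<subseteq> E"
    and "induced_connected (L2_adj E) B"
    and "e0 \<in> B"
  shows "\<exists>T. tree23 E T \<and> T \<subseteq> B \<and> e0 \<in> T
             \<and> real (card T) \<ge> real (card B) / (real k * real \<Delta>)"
proof -
  have "finite B" using assms(1,4) hypergraph_finite_edges finite_subset by blast
  let ?C = "{T. T \<subseteq> B \<and> e0 \<in> T \<and> tree23 E T}"
  have "finite ?C" using \<open>finite B\<close> by (auto intro: finite_subset[of _ "Pow B"])
  moreover have "{e0} \<in> ?C" using assms(4,6) by (auto simp: tree23_def induced_connected_def)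
  ultimately obtain T where "T \<in> ?C" and maximal: "\<forall>T'\<in>?C. T \<subseteq> T' \<longrightarrow> T = T'"
    by (meson finite_has_maximal2)
  then have "T \<subseteq> B" and "e0 \<in> T" and "tree23 E T" by simp_all
  have "z \<in> T" if "z \<in> B" and "tree23 E (insert z T)" for z
    using maximal \<open>T \<subseteq> B\<close> \<open>e0 \<in> T\<close> that by blast
  then have "\<forall>f\<in>B. \<exists>t\<in>T. lin_dist_le E 1 f t"
    using maximal_tree23_dominates[OF assms(5) \<open>e0 \<in> T\<close> \<open>T \<subseteq> B\<close> \<open>tree23 E T\<close>] by blast
  then have "card B \<le> card T * (k * \<Delta>)" if "0 < k * \<Delta>"
    using card_le_card_mult_if_dominated[OF assms(1,3)] that assms(2,4) \<open>T \<subseteq> B\<close> by auto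
  \<comment> \<open>if k\<Delta> = 0 the bound is x / 0 = 0\<close>
  then have "real (card B) / (real k * real \<Delta>) \<le> real (card T)"
    by (cases "k * \<Delta> = 0") (auto simp: divide_le_eq simp flip: of_nat_mult)
  with \<open>tree23 E T\<close> \<open>T \<subseteq> B\<close> \<open>e0 \<in> T\<close> show ?thesis by blast
qed

end
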